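(* Let $s\ge1$, $M=(p^s-1)/2$, and $1\le l\le g$. Put $\delta_l=(2g+1)M-lp^s$. With respect to the lexicographic order of monomials with $z_1>z_2>\dots>z_n$, the leading term of $I^{[lp^s-1]}_{p^s}(z)$ is $$(-1)^{\delta_l}\binom{M}{l}\Big(0,\dots,0,\tfrac{l}{M},1,\dots,1\Big)\,z_1^M\cdots z_{2g-2l}^M\,z_{2g-2l+1}^{M-l},$$ where in the vector the entry $0$ is repeated $2g-2l$ times, followed by $l/M$ (in position $2g-2l+1$), followed by $2l$ entries equal to $1$. (The vector $\binom Ml(0,\dots,0,l/M,1,\dots,1)$ has integer entries.)
   Context: Let $p$ be an odd prime, $g\ge1$, $n=2g+1$, with $p>n$; $z=(z_1,\dots,z_n)$. For a positive integer $r$ put $M_r=(p^r-1)/2$, $\Phi_{p^r}(x,z)=\prod_{i=1}^n(x-z_i)^{M_r}$, expand $\Big(\frac{\Phi_{p^r}}{x-z_1},\dots,\frac{\Phi_{p^r}}{x-z_n}\Big)=\sum_iP^i_{p^r}(z)x^i$ with $P^i_{p^r}(z)\in\mathbb Z[z]^n$, and set $I^{[lp^r-1]}_{p^r}(z)=P^{lp^r-1}_{p^r}(z)$. Leading term: for a nonzero (vector) polynomial $f(z)=\sum_d a_dz_1^{d_1}\cdots z_n^{d_n}$ (with $a_d$ scalars or vectors), its leading term is the nonzero summand $a_dz^d$ whose monomial $z^d$ is largest in the lexicographic order with $z_1>\dots>z_n$. *)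

theory Defs
  imports "HOL-Computational_Algebra.Polynomial" "HOL-Library.Poly_Mapping"
    "HOL-Computational_Algebra.Primes"
begin

text \<open>Multivariate integer polynomials in variables z_1, z_2, ... :
  maps from exponent vectors (finitely supported nat => nat, variable index => exponent)
  to integer coefficients, with convolution product.\<close>
type_synonym mpoly = "(nat \<Rightarrow>\<^sub>0 nat) \<Rightarrow>\<^sub>0 int"

definition zvar :: "nat \<Rightarrow> mpoly" where
  "zvar i = Poly_Mapping.single (Poly_Mapping.single i 1) 1"

definition Phi :: "nat \<Rightarrow> nat \<Rightarrow> mpoly poly" where
  "Phi n q = (\<Prod>i\<in>{1..n}. [:- zvar i, 1:] ^ ((q - 1) div 2))"

text \<open>Phi_q / (x - z_i), the exact quotient.\<close>
definition Phi_quot :: "nat \<Rightarrow> nat \<Rightarrow> nat \<Rightarrow> mpoly poly" where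
  "Phi_quot n q i = (\<Prod>j\<in>{1..n} - {i}. [:- zvar j, 1:] ^ ((q - 1) div 2))
                     * [:- zvar i, 1:] ^ ((q - 1) div 2 - 1)"

definition Pvec :: "nat \<Rightarrow> nat \<Rightarrow> nat \<Rightarrow> nat \<Rightarrow> mpoly" where
  "Pvec n q k i = coeff (Phi_quot n q i) k"

definition lex_less :: "(nat \<Rightarrow>\<^sub>0 nat) \<Rightarrow> (nat \<Rightarrow>\<^sub>0 nat) \<Rightarrow> bool" where
  "lex_less d e \<longleftrightarrow> (\<exists>k. (\<forall>j<k. Poly_Mapping.lookup d j = Poly_Mapping.lookup e j) \<and> Poly_Mapping.lookup d k < Poly_Mapping.lookup e k)"

definition leading_term ::
  "(nat \<Rightarrow> mpoly) \<Rightarrow> nat set \<Rightarrow> (nat \<Rightarrow> int) \<Rightarrow> (nat \<Rightarrow>\<^sub>0 nat) \<Rightarrow> bool" where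
  "leading_term f A c d \<longleftrightarrow>
     (\<exists>i\<in>A. c i \<noteq> 0) \<and>
     (\<forall>i\<in>A. Poly_Mapping.lookup (f i) d = c i) \<and>
     (\<forall>i\<in>A. \<forall>e. Poly_Mapping.lookup (f i) e \<noteq> 0 \<longrightarrow> e = d \<or> lex_less e d)"

end

theory Submission imports Defs begin

text \<open>\<open>\<Phi>\<^sub>q/(x - z\<^sub>i)\<close> is the product of the \<open>(x - z\<^sub>j) ^ m\<^sub>j\<close> with \<open>m\<^sub>i = M - 1\<close> and
  \<open>m\<^sub>j = M\<close> otherwise, so its coefficient at \<open>x ^ k z ^ e\<close> is \<open>(-1) ^ |e| \<Prod>\<^sub>j (m\<^sub>j choose e\<^sub>j)\<close>
  if \<open>e \<le> m\<close> and \<open>|e| + k = \<Sum>\<^sub>j m\<^sub>j\<close>, and \<open>0\<close> otherwise. For \<open>k = l p ^ s - 1\<close> this forces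
  \<open>|e| = (2g - 2l) M + (M - l)\<close>, and among all exponents with entries at most \<open>M\<close> and this degree
  the lexicographically largest is the greedy one \<open>(M, \<dots>, M, M - l, 0, \<dots>, 0)\<close>. Its coefficient
  vanishes in the components \<open>i \<le> 2g - 2l\<close>, where \<open>m\<^sub>i = M - 1 < M\<close>; in the others it is
  \<open>\<plusminus>(M - 1 choose M - l) = \<plusminus>(l/M) (M choose l)\<close> resp. \<open>\<plusminus>(M choose M - l) = \<plusminus>(M choose l)\<close>.\<close>

abbreviation lookup :: "('a \<Rightarrow>\<^sub>0 'b::zero) \<Rightarrow> 'a \<Rightarrow> 'b" where
  "lookup \<equiv> Poly_Mapping.lookup"

abbreviation single :: "'a \<Rightarrow> 'b::zero \<Rightarrow> 'a \<Rightarrow>\<^sub>0 'b" where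
  "single \<equiv> Poly_Mapping.single"

lemma neg_zvar_power: "(- zvar j) ^ t = single (single j t) ((-1) ^ t)"
  by (induction t) (simp_all add: zvar_def mult_single single_uminus add.commute flip: single_add)

lemma coeff_linear_factor_power:
  "coeff ([:- zvar j, 1:] ^ m) t =
     (if t \<le> m then single (single j (m - t)) ((-1) ^ (m - t) * int (m choose t)) else 0)"
proof (cases "t \<le> m")
  case True
  have "coeff ([:- zvar j, 1:] ^ m) t = of_nat (m choose t) * (- zvar j) ^ (m - t)"
    using coeff_linear_poly_power[OF True, of "- zvar j" 1] by simp
  also have "\<dots> = single (single j (m - t)) ((-1) ^ (m - t) * int (m choose t))"
    by (simp del: single_of_nat add: neg_zvar_power mult_single mult.commute
        flip: single_of_nat[where 'a="nat \<Rightarrow>\<^sub>0 nat" and 'b=int])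
  finally show ?thesis using True by simp
next
  case False
  then show ?thesis by (simp add: coeff_eq_0 degree_linear_power)
qed

lemma lookup_single_mult_avoiding:
  fixes f :: mpoly
  assumes avoid: "\<And>e'. j \<in> Poly_Mapping.keys e' \<Longrightarrow> lookup f e' = 0"
  shows "lookup (single (single j t) c * f) e =
           (if lookup e j = t then c * lookup f (e - single j t) else 0)"
proof -
  have expand: "lookup (single (single j t) c * f) e =
                  c * Sum_any (\<lambda>e'. lookup f e' when e = single j t + e')"
    unfolding lookup_mult lookup_single by (simp only: when_mult Sum_any_when_equal')
  show ?thesis
  proof (cases "t \<le> lookup e j")
    case True
    have e_split: "e = single j t + (e - single j t)"
      using True by (intro poly_mapping_eqI) (auto simp: lookup_add lookup_minus lookup_single when_def)
    have "lookup (single (single j t) c * f) e = c * lookup f (e - single j t)"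
      unfolding expand by (subst (1 2) e_split) simp
    moreover have "lookup f (e - single j t) = 0" if "lookup e j \<noteq> t"
      using True that by (intro avoid) (simp add: in_keys_iff lookup_minus)
    ultimately show ?thesis by simp
  next
    case False
    then have "e \<noteq> single j t + e'" for e'
      by (auto simp: lookup_add)
    then show ?thesis using False unfolding expand by (simp add: when_def)
  qed
qed

definition prod_linear_factors_coeff ::
  "nat set \<Rightarrow> (nat \<Rightarrow> nat) \<Rightarrow> nat \<Rightarrow> (nat \<Rightarrow>\<^sub>0 nat) \<Rightarrow> int" where
  "prod_linear_factors_coeff A m k e =
     (if Poly_Mapping.keys e \<subseteq> A \<and> (\<forall>j\<in>A. lookup e j \<le> m j) \<and>
         (\<Sum>j\<in>A. lookup e j) + k = (\<Sum>j\<in>A. m j)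
      then (-1) ^ (\<Sum>j\<in>A. lookup e j) * (\<Prod>j\<in>A. int (m j choose lookup e j)) else 0)"

lemma prod_linear_factors_coeff_nonzeroD:
  assumes "prod_linear_factors_coeff A m k e \<noteq> 0"
  shows "Poly_Mapping.keys e \<subseteq> A" "\<forall>j\<in>A. lookup e j \<le> m j"
    "(\<Sum>j\<in>A. lookup e j) + k = (\<Sum>j\<in>A. m j)"
  using assms by (simp_all add: prod_linear_factors_coeff_def split: if_splits)

lemma prod_linear_factors_coeff_insert:
  assumes "finite A" "j \<notin> A"
  shows "prod_linear_factors_coeff (insert j A) m k e =
    (if lookup e j \<le> m j \<and> m j - lookup e j \<le> k
     then (-1) ^ lookup e j * int (m j choose lookup e j) *
          prod_linear_factors_coeff A m (k - (m j - lookup e j)) (e - single j (lookup e j))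
     else 0)"
proof -
  define e' where "e' = e - single j (lookup e j)"
  have lookup_e': "lookup e' x = (if x = j then 0 else lookup e x)" for x
    by (simp add: e'_def lookup_minus lookup_single when_def)
  have keys: "Poly_Mapping.keys e \<subseteq> insert j A \<longleftrightarrow> Poly_Mapping.keys e' \<subseteq> A"
    by (auto simp: subset_iff in_keys_iff lookup_e')
  have on_A: "x \<in> A \<Longrightarrow> lookup e' x = lookup e x" for x
    using assms(2) by (auto simp: lookup_e')
  have sum_A: "(\<Sum>x\<in>A. lookup e' x) = (\<Sum>x\<in>A. lookup e x)"
    and prod_A: "(\<Prod>x\<in>A. int (m x choose lookup e' x)) = (\<Prod>x\<in>A. int (m x choose lookup e x))"
    by (simp_all add: on_A cong: sum.cong prod.cong)
  have bound_A: "(\<forall>x\<in>A. lookup e' x \<le> m x) \<longleftrightarrow> (\<forall>x\<in>A. lookup e x \<le> m x)"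
    by (simp add: on_A)
  show ?thesis
  proof (cases "lookup e j \<le> m j \<and> m j - lookup e j \<le> k")
    case True
    then show ?thesis
      using assms unfolding prod_linear_factors_coeff_def e'_def[symmetric]
      by (auto simp: keys sum_A prod_A bound_A power_add)
  next
    case False
    have "(\<Sum>x\<in>A. lookup e x) \<le> (\<Sum>x\<in>A. m x)" if "\<forall>x\<in>A. lookup e x \<le> m x"
      using that by (intro sum_mono) auto
    then show ?thesis
      using assms False unfolding prod_linear_factors_coeff_def by auto
  qed
qed

lemma lookup_coeff_prod_linear_factors:
  assumes "finite A"
  shows "lookup (coeff (\<Prod>j\<in>A. [:- zvar j, 1:] ^ m j) k) e = prod_linear_factors_coeff A m k e"
  using assms
proof (induction A arbitrary: k e rule: finite_induct)
  case empty
  show ?case by (auto simp: prod_linear_factors_coeff_def lookup_one when_def coeff_1)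
next
  case (insert j A)
  define P where "P = (\<Prod>j\<in>A. [:- zvar j, 1:] ^ m j)"
  define E where "E = lookup e j"
  define c where "c = (-1) ^ E * int (m j choose E) *
                      prod_linear_factors_coeff A m (k - (m j - E)) (e - single j E)"
  have IH: "lookup (coeff P k') e' = prod_linear_factors_coeff A m k' e'" for k' e'
    unfolding P_def by (rule insert.IH)
  have avoid: "lookup (coeff P k') e' = 0" if "j \<in> Poly_Mapping.keys e'" for k' e'
    using insert.hyps(2) that unfolding IH prod_linear_factors_coeff_def by auto
  have mult: "lookup (single (single j t) a * coeff P k') e =
                (if E = t then a * lookup (coeff P k') (e - single j t) else 0)" for t a k'
    unfolding E_def by (rule lookup_single_mult_avoiding) (rule avoid)
  have factor_term: "lookup (coeff ([:- zvar j, 1:] ^ m j) i * coeff P (k - i)) e =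
                (if i = m j - E \<and> E \<le> m j then c else 0)" for i
  proof (cases "i \<le> m j \<and> E = m j - i")
    case True
    then have "i = m j - E" "m j choose i = m j choose E"
      using binomial_symmetric[of E "m j"] by auto
    then show ?thesis
      using True by (simp add: coeff_linear_factor_power mult IH c_def)
  next
    case False
    then show ?thesis
      by (auto simp: coeff_linear_factor_power mult)
  qed
  have "lookup (coeff (\<Prod>j\<in>insert j A. [:- zvar j, 1:] ^ m j) k) e =
          (\<Sum>i\<le>k. lookup (coeff ([:- zvar j, 1:] ^ m j) i * coeff P (k - i)) e)"
    using insert.hyps by (simp add: coeff_mult lookup_sum P_def)
  also have "\<dots> = (if E \<le> m j \<and> m j - E \<le> k then c else 0)"
    unfolding factor_term by (cases "E \<le> m j") (simp_all add: sum.delta)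
  also have "\<dots> = prod_linear_factors_coeff (insert j A) m k e"
    using insert.hyps by (simp add: prod_linear_factors_coeff_insert c_def E_def)
  finally show ?case .
qed

lemma Phi_quot_eq_prod:
  assumes "i \<in> {1..n}"
  shows "Phi_quot n q i =
    (\<Prod>j\<in>{1..n}. [:- zvar j, 1:] ^ (if j = i then (q - 1) div 2 - 1 else (q - 1) div 2))"
proof -
  have "(\<Prod>j\<in>{1..n}. [:- zvar j, 1:] ^ (if j = i then (q - 1) div 2 - 1 else (q - 1) div 2)) =
        [:- zvar i, 1:] ^ ((q - 1) div 2 - 1) *
        (\<Prod>j\<in>{1..n} - {i}. [:- zvar j, 1:] ^ (if j = i then (q - 1) div 2 - 1 else (q - 1) div 2))"
    using assms by (subst prod.remove[of _ i]) auto
  also have "(\<Prod>j\<in>{1..n} - {i}. [:- zvar j, 1:] ^ (if j = i then (q - 1) div 2 - 1 else (q - 1) div 2))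
      = (\<Prod>j\<in>{1..n} - {i}. [:- zvar j, 1:] ^ ((q - 1) div 2))"
    by (rule prod.cong) auto
  finally show ?thesis unfolding Phi_quot_def by (simp add: mult.commute)
qed

lemma lookup_Pvec:
  assumes "i \<in> {1..n}"
  shows "lookup (Pvec n q k i) e =
    prod_linear_factors_coeff {1..n} (\<lambda>j. if j = i then (q - 1) div 2 - 1 else (q - 1) div 2) k e"
  unfolding Pvec_def Phi_quot_eq_prod[OF assms] by (rule lookup_coeff_prod_linear_factors) simp

lemma sum_quot_exponents:
  fixes i n M :: nat
  assumes "i \<in> {1..n}" "M \<ge> 1"
  shows "(\<Sum>j\<in>{1..n}. if j = i then M - 1 else M) = n * M - 1"
proof -
  have "(\<Sum>j\<in>{1..n}. if j = i then M - 1 else M) =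
        (M - 1) + (\<Sum>j\<in>{1..n} - {i}. if j = i then M - 1 else M)"
    using assms(1) sum.remove[of "{1..n}" i "\<lambda>j. if j = i then M - 1 else M"] by simp
  also have "\<dots> = (M - 1) + (n - 1) * M"
    using assms(1) by simp
  also have "\<dots> = n * M - 1"
    using assms by (cases n) (auto simp: algebra_simps)
  finally show ?thesis .
qed

definition greedy_exponent :: "nat \<Rightarrow> nat \<Rightarrow> nat \<Rightarrow> nat \<Rightarrow>\<^sub>0 nat" where
  "greedy_exponent a M r =
     Abs_poly_mapping (\<lambda>j. if 1 \<le> j \<and> j \<le> a then M else if j = a + 1 then r else 0)"

lemma lookup_greedy_exponent:
  "lookup (greedy_exponent a M r) j = (if 1 \<le> j \<and> j \<le> a then M else if j = a + 1 then r else 0)"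
proof -
  have "finite {j. (if 1 \<le> j \<and> j \<le> a then M else if j = a + 1 then r else 0) \<noteq> 0}"
    by (rule finite_subset[of _ "{..a + 1}"]) (auto split: if_splits)
  then show ?thesis unfolding greedy_exponent_def by (simp add: lookup_Abs_poly_mapping)
qed

lemma sum_greedy_exponent:
  assumes "a < n"
  shows "(\<Sum>j\<in>{1..n}. lookup (greedy_exponent a M r) j) = a * M + r"
proof -
  have "(\<Sum>j\<in>{1..n}. lookup (greedy_exponent a M r) j) =
        (\<Sum>j\<in>{1..a}. M) + (\<Sum>j\<in>{a + 1}. r)"
    using assms
    by (subst sum.mono_neutral_cong_right[of "{1..n}" "{1..a} \<union> {a + 1}"])
       (auto simp: lookup_greedy_exponent sum.union_disjoint)
  then show ?thesis by simp
qed

lemma lex_less_greedy_exponent: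
  assumes keys: "Poly_Mapping.keys e \<subseteq> {1..n}" and bound: "\<And>j. lookup e j \<le> M"
    and "a < n" and deg: "(\<Sum>j\<in>{1..n}. lookup e j) = a * M + r"
    and ne: "e \<noteq> greedy_exponent a M r"
  shows "lex_less e (greedy_exponent a M r)"
proof -
  define d where "d = lookup (greedy_exponent a M r)"
  have "\<exists>t. lookup e t \<noteq> d t"
    using ne poly_mapping_eqI unfolding d_def by metis
  then obtain t where t: "lookup e t \<noteq> d t" and before: "\<forall>j<t. lookup e j = d j"
    using exists_least_iff[of "\<lambda>t. lookup e t \<noteq> d t"] by blast
  have "\<not> d t < lookup e t"
  proof
    assume gt: "d t < lookup e t"
    then have "t \<in> Poly_Mapping.keys e" by (simp add: in_keys_iff)
    then have "t \<in> {1..n}" using keys by blast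
    moreover have "a < t"
      using gt bound[of t] \<open>t \<in> {1..n}\<close> by (auto simp: d_def lookup_greedy_exponent split: if_splits)
    ultimately have "(\<Sum>j\<in>{1..n}. d j) = (\<Sum>j\<in>{1..t}. d j)"
      by (intro sum.mono_neutral_right) (auto simp: d_def lookup_greedy_exponent)
    also have "\<dots> < (\<Sum>j\<in>{1..t}. lookup e j)"
    proof -
      have last: "(\<Sum>j\<in>{1..t}. f j) = (\<Sum>j\<in>{1..<t}. f j) + f t" for f :: "nat \<Rightarrow> nat"
        using \<open>t \<in> {1..n}\<close> by (simp flip: atLeastLessThanSuc_atLeastAtMost)
      show ?thesis
        unfolding last using gt before by simp
    qed
    also have "\<dots> \<le> (\<Sum>j\<in>{1..n}. lookup e j)"
      using \<open>t \<in> {1..n}\<close> by (intro sum_mono2) auto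
    finally show False using deg sum_greedy_exponent[OF \<open>a < n\<close>] unfolding d_def by simp
  qed
  then show ?thesis
    using t before unfolding lex_less_def d_def by (metis linorder_neqE_nat)
qed

lemma prod_linear_factors_coeff_greedy:
  fixes i n :: nat
  assumes i: "i \<in> {1..n}" and "a < n" "r < M" and deg: "a * M + r + k = n * M - 1"
  shows "prod_linear_factors_coeff {1..n} (\<lambda>j. if j = i then M - 1 else M) k (greedy_exponent a M r) =
    (if i \<le> a then 0 else (-1) ^ (a * M + r) * int ((if i = a + 1 then M - 1 else M) choose r))"
proof -
  define m where "m j = (if j = i then M - 1 else M)" for j
  define d where "d = greedy_exponent a M r"
  have lookup_d: "lookup d j = (if 1 \<le> j \<and> j \<le> a then M else if j = a + 1 then r else 0)" for j
    unfolding d_def by (rule lookup_greedy_exponent)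
  have keys: "Poly_Mapping.keys d \<subseteq> {1..n}"
    using \<open>a < n\<close> by (auto simp: in_keys_iff lookup_d split: if_splits)
  have sum_d: "(\<Sum>j\<in>{1..n}. lookup d j) = a * M + r"
    unfolding d_def using \<open>a < n\<close> by (rule sum_greedy_exponent)
  have deg': "(\<Sum>j\<in>{1..n}. lookup d j) + k = (\<Sum>j\<in>{1..n}. m j)"
    using sum_quot_exponents[OF i, of M] deg \<open>r < M\<close> unfolding sum_d m_def by simp
  show ?thesis
  proof (cases "i \<le> a")
    case True
    then have "\<not> lookup d i \<le> m i"
      using i \<open>r < M\<close> by (simp add: lookup_d m_def)
    then show ?thesis
      using i True unfolding prod_linear_factors_coeff_def d_def[symmetric] m_def[symmetric] by auto
  next
    case False
    have bound: "\<forall>j\<in>{1..n}. lookup d j \<le> m j"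
      using False \<open>r < M\<close> by (auto simp: lookup_d m_def)
    have "(\<Prod>j\<in>{1..n}. int (m j choose lookup d j)) =
          int (m (a + 1) choose lookup d (a + 1)) * (\<Prod>j\<in>{1..n} - {a + 1}. int (m j choose lookup d j))"
      using \<open>a < n\<close> by (intro prod.remove) auto
    also have "(\<Prod>j\<in>{1..n} - {a + 1}. int (m j choose lookup d j)) = 1"
      using False by (intro prod.neutral) (auto simp: lookup_d m_def)
    finally have "(\<Prod>j\<in>{1..n}. int (m j choose lookup d j)) = int (m (a + 1) choose r)"
      by (simp add: lookup_d)
    then show ?thesis
      using False keys bound deg' \<open>r < M\<close>
      unfolding prod_linear_factors_coeff_def d_def[symmetric] m_def[symmetric] sum_d
      by (simp add: m_def)
  qed
qed

lemma leading_term_Pvec: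
  assumes "a + 1 < n" "r < M" "a * M + r + k = n * M - 1" and M: "M = (q - 1) div 2"
  shows "leading_term (Pvec n q k) {1..n}
     (\<lambda>i. if i \<le> a then 0 else (-1) ^ (a * M + r) * int ((if i = a + 1 then M - 1 else M) choose r))
     (greedy_exponent a M r)"
proof -
  have coeff: "lookup (Pvec n q k i) e =
      prod_linear_factors_coeff {1..n} (\<lambda>j. if j = i then M - 1 else M) k e" if "i \<in> {1..n}" for i e
    using lookup_Pvec[OF that] unfolding M .
  have lex: "lex_less e (greedy_exponent a M r)"
    if i: "i \<in> {1..n}" and nz: "lookup (Pvec n q k i) e \<noteq> 0" and ne: "e \<noteq> greedy_exponent a M r" for i e
  proof -
    note support = prod_linear_factors_coeff_nonzeroD[OF nz[unfolded coeff[OF i]]]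
    show ?thesis
    proof (rule lex_less_greedy_exponent[OF support(1) _ _ _ ne])
      show "lookup e j \<le> M" for j
      proof (cases "j \<in> {1..n}")
        case True
        then have "lookup e j \<le> (if j = i then M - 1 else M)" using support(2) by blast
        then show ?thesis by (simp split: if_splits)
      next
        case False
        then have "j \<notin> Poly_Mapping.keys e" using support(1) by blast
        then show ?thesis by (simp add: in_keys_iff)
      qed
      show "(\<Sum>j\<in>{1..n}. lookup e j) = a * M + r"
        using support(3) sum_quot_exponents[OF i, of M] assms(2,3) by simp
    qed (use assms(1) in simp)
  qed
  have "n \<in> {1..n}" "\<not> n \<le> a" "n \<noteq> a + 1" "M choose r \<noteq> 0"
    using assms(1,2) by simp_all
  then show ?thesis
    unfolding leading_term_def
  proof (intro conjI bexI[of _ n])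
    show "\<forall>i\<in>{1..n}. lookup (Pvec n q k i) (greedy_exponent a M r) =
      (if i \<le> a then 0 else (-1) ^ (a * M + r) * int ((if i = a + 1 then M - 1 else M) choose r))"
    proof
      fix i assume i: "i \<in> {1..n}"
      show "lookup (Pvec n q k i) (greedy_exponent a M r) =
        (if i \<le> a then 0 else (-1) ^ (a * M + r) * int ((if i = a + 1 then M - 1 else M) choose r))"
        unfolding coeff[OF i] using assms(1-3) by (intro prod_linear_factors_coeff_greedy[OF i]) simp_all
    qed
    show "\<forall>i\<in>{1..n}. \<forall>e. lookup (Pvec n q k i) e \<noteq> 0 \<longrightarrow>
            e = greedy_exponent a M r \<or> lex_less e (greedy_exponent a M r)"
      using lex by blast
  qed simp_all
qed

lemma binomial_pred_complement:
  assumes "1 \<le> l" "l \<le> M"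
  shows "of_nat ((M - 1) choose (M - l)) = of_nat (M choose l) * (of_nat l / of_nat M :: 'a :: field_char_0)"
proof -
  have "(M - 1) choose (M - l) = (M - 1) choose (l - 1)"
    using binomial_symmetric[of "l - 1" "M - 1"] assms by simp
  moreover have "l * (M choose l) = M * ((M - 1) choose (l - 1))"
    using assms by (intro times_binomial_minus1_eq) simp
  then have "of_nat l * of_nat (M choose l) = (of_nat M * of_nat ((M - 1) choose (l - 1)) :: 'a)"
    by (metis of_nat_mult)
  ultimately show ?thesis
    using assms by (simp add: field_simps)
qed

lemma greedy_coeff_closed_form:
  assumes "1 \<le> l" "l < M"
  shows "of_int (if i \<le> a then 0 else (-1) ^ N * int ((if i = a + 1 then M - 1 else M) choose (M - l))) =
         (-1 :: 'a :: field_char_0) ^ N * of_nat (M choose l) *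
         (if i \<le> a then 0 else if i = a + 1 then of_nat l / of_nat M else 1)"
proof -
  have "of_nat ((M - 1) choose (M - l)) = (of_nat (M choose l) * (of_nat l / of_nat M) :: 'a)"
    using assms by (intro binomial_pred_complement) simp_all
  moreover have "M choose (M - l) = M choose l"
    using binomial_symmetric[of l M] \<open>l < M\<close> by simp
  ultimately show ?thesis
    by (cases "i \<le> a"; cases "i = a + 1") simp_all
qed

theorem lemma7p2:
  fixes p g s l :: nat
  assumes "prime p" and "odd p" and "g \<ge> 1" and "p > 2 * g + 1"
    and "s \<ge> 1" and "1 \<le> l" and "l \<le> g"
  defines "n \<equiv> 2 * g + 1"
    and "M \<equiv> (p ^ s - 1) div 2"
  defines "\<delta> \<equiv> int n * int M - int l * int (p ^ s)"
  shows "\<exists>c :: nat \<Rightarrow> int.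
     leading_term (Pvec n (p ^ s) (l * p ^ s - 1)) {1..n} c
       (Abs_poly_mapping (\<lambda>j. if 1 \<le> j \<and> j \<le> 2 * g - 2 * l then M
                               else if j = 2 * g - 2 * l + 1 then M - l else 0))
     \<and> (\<forall>i\<in>{1..n}. of_int (c i) =
          (-1 :: rat) powi \<delta> * of_nat (M choose l) *
          (if i \<le> 2 * g - 2 * l then 0
           else if i = 2 * g - 2 * l + 1 then of_nat l / of_nat M else 1))"
proof -
  define a where "a = 2 * g - 2 * l"
  have q: "p ^ s = 2 * M + 1"
    using \<open>odd p\<close> unfolding M_def by (auto elim!: oddE)
  have "p \<le> p ^ s"
    using \<open>s \<ge> 1\<close> prime_gt_1_nat[OF \<open>prime p\<close>] by (simp add: self_le_power)
  then have "l < M"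
    using \<open>odd p\<close> \<open>p > 2 * g + 1\<close> \<open>l \<le> g\<close> q by presburger
  have n: "n = a + 2 * l + 1"
    unfolding n_def a_def using \<open>l \<le> g\<close> by simp
  have deg: "a * M + (M - l) + (l * p ^ s - 1) = n * M - 1"
    unfolding n q using \<open>1 \<le> l\<close> \<open>l < M\<close> by (simp add: algebra_simps)
  have sign: "(-1 :: rat) powi \<delta> = (-1) ^ (a * M + (M - l))"
  proof -
    have "\<delta> = int (a * M + (M - l))"
      unfolding \<delta>_def n q using \<open>l < M\<close> by (simp add: of_nat_diff algebra_simps)
    then show ?thesis by (simp only: power_int_of_nat)
  qed
  have "leading_term (Pvec n (p ^ s) (l * p ^ s - 1)) {1..n}
     (\<lambda>i. if i \<le> a then 0 else (-1) ^ (a * M + (M - l)) * int ((if i = a + 1 then M - 1 else M) choose (M - l)))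
     (greedy_exponent a M (M - l))"
    by (rule leading_term_Pvec[OF _ _ deg M_def[THEN meta_eq_to_obj_eq]])
       (use \<open>1 \<le> l\<close> \<open>l < M\<close> n in simp_all)
  moreover have "of_int (if i \<le> a then 0 else
                   (-1) ^ (a * M + (M - l)) * int ((if i = a + 1 then M - 1 else M) choose (M - l))) =
                 (-1 :: rat) powi \<delta> * of_nat (M choose l) *
                 (if i \<le> a then 0 else if i = a + 1 then of_nat l / of_nat M else 1)" for i
    unfolding sign using \<open>1 \<le> l\<close> \<open>l < M\<close> by (rule greedy_coeff_closed_form)
  ultimately show ?thesis
    unfolding greedy_exponent_def a_def[symmetric] by (intro exI conjI) (assumption, simp)
qed

end
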